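(* Let $E$ be a Banach space with separable dual $E^{*}$ and let $\mu$ be a probability measure on $E$ with $\int_{E}\|x\|\,d\mu(x)<\infty$ and $\int_{E}x\,d\mu(x)=0$. Let $n\in\mathbb{N}$, let $X_{1},\ldots,X_{n}$ be i.i.d. random elements of $E$ with distribution $\mu$, and let $\epsilon_{1},\ldots,\epsilon_{n}$ be i.i.d. uniform $\pm1$ random variables independent of $X_{1},\ldots,X_{n}$. Then \[\mathbb{E}\,W_{1,1}\Big(\mu,\frac{1}{n}\sum_{i=1}^{n}\delta_{X_{i}}\Big)\geq\frac{1}{2n}\mathbb{E}\Big\|\sum_{i=1}^{n}\epsilon_{i}X_{i}\Big\|.\]
   Context: $B_{E^{*}}=\{v^{*}\in E^{*}:\|v^{*}\|\leq1\}$. For probability measures $\mu_{1},\mu_{2}$ on $E$, $W_{1,1}(\mu_{1},\mu_{2})=\sup_{v^{*}\in B_{E^{*}}}W_{1}(v^{*}_{\#}\mu_{1},v^{*}_{\#}\mu_{2})$, where $v^{*}_{\#}\mu_{i}$ is the pushforward under $v^{*}$ and $W_{1}$ is the 1-Wasserstein distance on $\mathbb{R}$. $\delta_{x}$ denotes a Dirac mass. *)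

theory Defs
  imports "HOL-Probability.Probability"
begin

text \<open>1-Wasserstein distance between probability measures on the real line,
  defined via couplings (value in ennreal; infimum over the empty set is top).\<close>
definition W1 :: "real measure \<Rightarrow> real measure \<Rightarrow> ennreal" where
  "W1 P Q = (INF \<pi> \<in> {\<pi> :: (real \<times> real) measure.
        prob_space \<pi> \<and> sets \<pi> = sets borel \<and>
        distr \<pi> borel fst = P \<and> distr \<pi> borel snd = Q}.
      (\<integral>\<^sup>+ z. ennreal \<bar>fst z - snd z\<bar> \<partial>\<pi>))"

definition W11 :: "'a::real_normed_vector measure \<Rightarrow> 'a measure \<Rightarrow> ennreal" where
  "W11 \<mu>1 \<mu>2 = (SUP v \<in> {v :: 'a \<Rightarrow>\<^sub>L real. norm v \<le> 1}.
      W1 (distr \<mu>1 borel (blinfun_apply v)) (distr \<mu>2 borel (blinfun_apply v)))"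

text \<open>Empirical measure (1/n) sum_{i<n} delta_{x i}, as a measure on the Borel sets.\<close>
definition empirical :: "nat \<Rightarrow> (nat \<Rightarrow> 'a::topological_space) \<Rightarrow> 'a measure" where
  "empirical n x = distr (uniform_count_measure {..<n}) borel x"

end

theory Submission
  imports Defs
begin

text \<open>Write \<open>S = X\<^sub>1 + \<dots> + X\<^sub>n\<close>. By Hahn--Banach there is \<open>v\<close> with \<open>\<parallel>v\<parallel> \<le> 1\<close> and
  \<open>v S = \<parallel>S\<parallel>\<close>. Every coupling of the images of \<open>\<mu>\<close> and of the empirical measure under \<open>v\<close>
  has \<open>\<integral>|s - t| \<ge> |\<integral>s - \<integral>t|\<close>, and these means are \<open>0\<close> (as \<open>\<mu>\<close> is centred) and \<open>v S / n\<close>;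
  so \<open>W_{1,1} \<ge> \<parallel>S\<parallel>/n\<close> pointwise. For fixed signs, \<open>\<Sum>\<epsilon>\<^sub>iX\<^sub>i = \<Sum>\<^sub>A X\<^sub>i - \<Sum>\<^sub>B X\<^sub>i\<close>, and
  Jensen's inequality in one centred coordinate at a time shows that \<open>E\<parallel>\<Sum>\<^sub>A X\<^sub>i\<parallel>\<close> grows
  with \<open>A\<close>; hence \<open>E\<parallel>\<Sum>\<epsilon>\<^sub>iX\<^sub>i\<parallel> \<le> 2 E\<parallel>S\<parallel>\<close>.\<close>

section \<open>Norming functionals\<close>

text \<open>A subspace of \<open>E \<times> \<real>\<close> on which the second coordinate is dominated by the norm of the
  first is the graph of a linear functional of norm at most 1 on a subspace of \<open>E\<close>.\<close>
definition norm_dominated :: "('a::real_normed_vector \<times> real) set \<Rightarrow> bool" where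
  "norm_dominated G \<longleftrightarrow> subspace G \<and> (\<forall>(x, a)\<in>G. a \<le> norm x)"

lemma norm_dominated_unique:
  assumes G: "norm_dominated G" and "(x, a) \<in> G" "(x, b) \<in> G"
  shows "a = b"
proof -
  have sub: "subspace G" using G by (simp add: norm_dominated_def)
  have "(x, a) - (x, b) \<in> G" "(x, b) - (x, a) \<in> G"
    using subspace_diff[OF sub] assms(2,3) by blast+
  then have "(0, a - b) \<in> G" "(0, b - a) \<in> G" by simp_all
  then have "a - b \<le> 0" "b - a \<le> 0"
    using G by (auto simp: norm_dominated_def)
  then show ?thesis by simp
qed

lemma norm_dominated_extension_value:
  assumes G: "norm_dominated G"
  obtains c where "\<And>x a. (x, a) \<in> G \<Longrightarrow> a - norm (x - z) \<le> c"
    and "\<And>y b. (y, b) \<in> G \<Longrightarrow> c \<le> norm (y + z) - b"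
proof -
  have sep: "a - norm (x - z) \<le> norm (y + z) - b" if "(x, a) \<in> G" "(y, b) \<in> G" for x a y b
  proof -
    have "(x + y, a + b) \<in> G"
      using G that subspace_add[of G "(x, a)" "(y, b)"] by (simp add: norm_dominated_def)
    then have "a + b \<le> norm (x + y)"
      using G by (auto simp: norm_dominated_def)
    also have "\<dots> \<le> norm (x - z) + norm (y + z)"
      using norm_triangle_ineq[of "x - z" "y + z"] by simp
    finally show ?thesis by simp
  qed
  define L where "L = {a - norm (x - z) | x a. (x, a) \<in> G}"
  have "(0, 0) \<in> G"
    using G subspace_0 by (force simp: norm_dominated_def zero_prod_def)
  then have "L \<noteq> {}" and "bdd_above L"
    unfolding L_def bdd_above_def using sep by fastforce+
  then show ?thesis
    using sep by (intro that[of "Sup L"] cSup_upper cSup_least) (auto simp: L_def)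
qed

lemma norm_dominated_extend:
  assumes G: "norm_dominated G" and z: "z \<notin> fst ` G"
  obtains G' where "norm_dominated G'" and "G \<subset> G'"
proof -
  obtain c where c_lower: "\<And>x a. (x, a) \<in> G \<Longrightarrow> a - norm (x - z) \<le> c"
    and c_upper: "\<And>y b. (y, b) \<in> G \<Longrightarrow> c \<le> norm (y + z) - b"
    using norm_dominated_extension_value[OF G] by blast
  have sub: "subspace G" and dom: "\<And>x a. (x, a) \<in> G \<Longrightarrow> a \<le> norm x"
    using G by (auto simp: norm_dominated_def)
  define G' where "G' = span (insert (z, c) G)"
  have span_G: "span G = G" using sub by simp
  have G'_iff: "(x, a) \<in> G' \<longleftrightarrow> (\<exists>t. (x - t *\<^sub>R z, a - t * c) \<in> G)" for x a
    unfolding G'_def span_insert span_G by simp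
  have "a \<le> norm x" if xa: "(x, a) \<in> G'" for x a
  proof -
    obtain t where "(x - t *\<^sub>R z, a - t * c) \<in> G"
      using xa unfolding G'_iff by blast
    moreover define y b where "y = x - t *\<^sub>R z" and "b = a - t * c"
    ultimately have yb: "(y, b) \<in> G" and x: "x = y + t *\<^sub>R z" and a: "a = b + t * c"
      by simp_all
    consider "t = 0" | "t > 0" | "t < 0" by linarith
    then show ?thesis
    proof cases
      case 1
      then show ?thesis using dom[OF yb] x a by simp
    next
      case 2
      have "((1 / t) *\<^sub>R y, b / t) \<in> G"
        using subspace_scale[OF sub yb, of "1 / t"] by simp
      from mult_left_mono[OF c_upper[OF this], of t] 2
      have "t * c \<le> norm (t *\<^sub>R ((1 / t) *\<^sub>R y + z)) - b"
        by (simp add: right_diff_distrib)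
      then show ?thesis using 2 x a by (simp add: scaleR_add_right)
    next
      case 3
      have "((- 1 / t) *\<^sub>R y, - b / t) \<in> G"
        using subspace_scale[OF sub yb, of "- 1 / t"] by simp
      from mult_left_mono[OF c_lower[OF this], of "- t"] 3
      have "b - norm ((- t) *\<^sub>R ((- 1 / t) *\<^sub>R y - z)) \<le> - t * c"
        by (simp add: right_diff_distrib)
      also have "(- t) *\<^sub>R ((- 1 / t) *\<^sub>R y - z) = x"
        using 3 x by (simp add: algebra_simps)
      finally show ?thesis using a by simp
    qed
  qed
  moreover have "subspace G'"
    unfolding G'_def by (rule subspace_span)
  ultimately have "norm_dominated G'"
    by (auto simp: norm_dominated_def)
  moreover have "G \<subset> G'"
  proof -
    have "G \<subseteq> G'" "(z, c) \<in> G'"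
      unfolding G'_def by (auto intro: span_superset span_base)
    moreover have "(z, c) \<notin> G"
      using z by (metis fst_conv image_eqI)
    ultimately show ?thesis by blast
  qed
  ultimately show ?thesis by (rule that)
qed

lemma norm_dominated_total_functional:
  assumes G: "norm_dominated G" and total: "\<And>x. \<exists>a. (x, a) \<in> G"
  obtains v :: "'a::real_normed_vector \<Rightarrow>\<^sub>L real"
  where "norm v \<le> 1" and "\<And>x a. (x, a) \<in> G \<Longrightarrow> v x = a"
proof -
  have sub: "subspace G" using G by (simp add: norm_dominated_def)
  define f where "f x = (SOME a. (x, a) \<in> G)" for x
  have graph: "(x, f x) \<in> G" for x
    unfolding f_def using total by (rule someI_ex)
  have f_eq: "f x = a" if "(x, a) \<in> G" for x a
    using norm_dominated_unique[OF G graph that] .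
  have "f (x + y) = f x + f y" for x y
    using f_eq subspace_add[OF sub graph[of x] graph[of y]] by simp
  moreover have "f (r *\<^sub>R x) = r *\<^sub>R f x" for r x
    using f_eq subspace_scale[OF sub graph[of x], of r] by simp
  moreover have f_bound: "norm (f x) \<le> norm x * 1" for x
  proof -
    have "f x \<le> norm x" "f (- x) \<le> norm (- x)"
      using G graph[of x] graph[of "- x"] by (auto simp: norm_dominated_def)
    moreover have "f (- x) = - f x"
      using f_eq subspace_neg[OF sub graph[of x]] by simp
    ultimately show ?thesis by simp
  qed
  ultimately have f: "bounded_linear f"
    by (rule bounded_linear_intro)
  show ?thesis
  proof (rule that[of "Blinfun f"])
    show "norm (Blinfun f) \<le> 1"
      using f_bound bounded_linear_Blinfun_apply[OF f] by (intro norm_blinfun_bound) auto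
    show "blinfun_apply (Blinfun f) x = a" if "(x, a) \<in> G" for x a
      using bounded_linear_Blinfun_apply[OF f] f_eq[OF that] by simp
  qed
qed

lemma norm_dominated_Union_chain:
  assumes "C \<noteq> {}" and "subset.chain {G. norm_dominated G} C"
  shows "norm_dominated (\<Union>C)"
proof -
  have sub: "\<And>G. G \<in> C \<Longrightarrow> subspace G"
    and bound: "\<And>G x a. G \<in> C \<Longrightarrow> (x, a) \<in> G \<Longrightarrow> a \<le> norm x"
    using assms(2) by (auto simp: subset.chain_def norm_dominated_def)
  have chain: "\<And>G H. G \<in> C \<Longrightarrow> H \<in> C \<Longrightarrow> G \<subseteq> H \<or> H \<subseteq> G"
    using assms(2) unfolding subset.chain_def by blast
  have "subspace (\<Union>C)"
    unfolding subspace_def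
  proof (intro conjI ballI allI)
    show "0 \<in> \<Union>C"
      using assms(1) sub subspace_0 by blast
  next
    fix u w assume "u \<in> \<Union>C" "w \<in> \<Union>C"
    then obtain G H where GH: "G \<in> C" "H \<in> C" "u \<in> G" "w \<in> H" by blast
    then have "G \<union> H \<in> C" "u \<in> G \<union> H" "w \<in> G \<union> H"
      using chain[OF GH(1,2)] by (auto simp: sup_absorb1 sup_absorb2)
    then have "u + w \<in> G \<union> H"
      using sub subspace_add by blast
    with \<open>G \<union> H \<in> C\<close> show "u + w \<in> \<Union>C" by blast
  next
    fix r u assume "u \<in> \<Union>C"
    then obtain G where "G \<in> C" "u \<in> G" by blast
    then have "r *\<^sub>R u \<in> G"
      using sub subspace_scale by blast
    with \<open>G \<in> C\<close> show "r *\<^sub>R u \<in> \<Union>C" by blast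
  qed
  then show ?thesis
    using bound by (auto simp: norm_dominated_def)
qed

text \<open>Hahn--Banach via Zorn's lemma: a maximal norm-dominated subspace containing
  \<open>(y, \<parallel>y\<parallel>)\<close> is the graph of a functional defined everywhere.\<close>
lemma exists_norming_functional:
  fixes y :: "'a::real_normed_vector"
  obtains v :: "'a \<Rightarrow>\<^sub>L real" where "norm v \<le> 1" and "v y = norm y"
proof -
  define \<A> where "\<A> = {G. norm_dominated G \<and> (y, norm y) \<in> G}"
  have "\<forall>(x, a)\<in>span {(y, norm y)}. a \<le> norm x"
    unfolding span_singleton by (auto intro: mult_right_mono)
  then have "span {(y, norm y)} \<in> \<A>"
    by (auto simp: \<A>_def norm_dominated_def intro: span_base)
  then have "\<A> \<noteq> {}" by blast
  moreover have "\<Union>C \<in> \<A>" if C: "C \<noteq> {}" "subset.chain \<A> C" for C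
  proof -
    have "subset.chain {G. norm_dominated G} C" "(y, norm y) \<in> \<Union>C"
      using C unfolding subset.chain_def \<A>_def by blast+
    then show ?thesis
      using norm_dominated_Union_chain[OF C(1)] unfolding \<A>_def by blast
  qed
  ultimately obtain G where G: "norm_dominated G" "(y, norm y) \<in> G"
    and maximal: "\<And>H. H \<in> \<A> \<Longrightarrow> G \<subseteq> H \<Longrightarrow> H = G"
    using subset_Zorn_nonempty[of \<A>] unfolding \<A>_def by blast
  have total: "\<exists>a. (x, a) \<in> G" for x
  proof (rule ccontr)
    assume "\<nexists>a. (x, a) \<in> G"
    then have "x \<notin> fst ` G" by force
    then obtain H where "norm_dominated H" "G \<subset> H"
      using norm_dominated_extend G(1) by blast
    with G(2) maximal[of H] show False
      unfolding \<A>_def by blast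
  qed
  obtain v :: "'a \<Rightarrow>\<^sub>L real" where "norm v \<le> 1" "\<And>x a. (x, a) \<in> G \<Longrightarrow> v x = a"
    using norm_dominated_total_functional[OF G(1) total] by blast
  with G(2) show ?thesis
    by (intro that) auto
qed

section \<open>Empirical measures and the Wasserstein distance\<close>

lemma integrable_uniform_count_measure:
  fixes f :: "'b \<Rightarrow> 'a::{banach,second_countable_topology}"
  assumes "finite A" "A \<noteq> {}"
  shows "integrable (uniform_count_measure A) f"
proof -
  have "0 < card A" using assms by (simp add: card_gt_0_iff)
  then have "ennreal (1 / card A) = ennreal 1 / ennreal (card A)"
    by (intro divide_ennreal[symmetric]) auto
  then have "(\<lambda>_. 1 / of_nat (card A) :: ennreal) = (\<lambda>_. ennreal (1 / card A))"
    by (simp add: ennreal_of_nat_eq_real_of_nat)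
  then show ?thesis
    using assms(1) by (simp add: uniform_count_measure_def integrable_point_measure_finite)
qed

lemma distr_empirical:
  assumes "f \<in> borel_measurable borel"
  shows "distr (empirical n x) borel f = empirical n (f \<circ> x)"
  unfolding empirical_def using assms by (simp add: distr_distr)

lemma integrable_empirical:
  fixes x :: "nat \<Rightarrow> 'a::{banach,second_countable_topology}"
  assumes "0 < n"
  shows "integrable (empirical n x) (\<lambda>t. t)"
  unfolding empirical_def using assms
  by (simp add: integrable_distr_eq integrable_uniform_count_measure lessThan_empty_iff)

lemma integral_empirical:
  fixes x :: "nat \<Rightarrow> real"
  shows "(\<integral>t. t \<partial>empirical n x) = (\<Sum>i<n. x i) / n"
  unfolding empirical_def by (simp add: integral_distr integral_uniform_count_measure)

lemma W1_ge_abs_mean_diff: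
  assumes P: "integrable P (\<lambda>t. t)" and Q: "integrable Q (\<lambda>t. t)"
  shows "ennreal \<bar>(\<integral>t. t \<partial>P) - (\<integral>t. t \<partial>Q)\<bar> \<le> W1 P Q"
  unfolding W1_def
proof (rule INF_greatest)
  fix \<pi> :: "(real \<times> real) measure"
  assume "\<pi> \<in> {\<pi>. prob_space \<pi> \<and> sets \<pi> = sets borel \<and>
    distr \<pi> borel fst = P \<and> distr \<pi> borel snd = Q}"
  then have \<pi>_sets: "sets \<pi> = sets borel"
    and \<pi>_fst: "distr \<pi> borel fst = P" and \<pi>_snd: "distr \<pi> borel snd = Q"
    by auto
  have meas: "fst \<in> borel_measurable \<pi>" "snd \<in> borel_measurable \<pi>"
    unfolding measurable_cong_sets[OF \<pi>_sets refl] by (simp_all add: borel_prod[symmetric])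
  have "integrable (distr \<pi> borel fst) (\<lambda>t. t) = integrable \<pi> (\<lambda>z. fst z)"
    "integrable (distr \<pi> borel snd) (\<lambda>t. t) = integrable \<pi> (\<lambda>z. snd z)"
    by (rule integrable_distr_eq[OF meas(1) measurable_ident_sets[OF refl]],
        rule integrable_distr_eq[OF meas(2) measurable_ident_sets[OF refl]])
  then have int: "integrable \<pi> fst" "integrable \<pi> snd"
    using P Q \<pi>_fst \<pi>_snd by simp_all
  have "(\<integral>t. t \<partial>distr \<pi> borel fst) = (\<integral>z. fst z \<partial>\<pi>)"
    "(\<integral>t. t \<partial>distr \<pi> borel snd) = (\<integral>z. snd z \<partial>\<pi>)"
    by (rule integral_distr[OF meas(1) measurable_ident_sets[OF refl]],
        rule integral_distr[OF meas(2) measurable_ident_sets[OF refl]])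
  then have means: "(\<integral>z. fst z \<partial>\<pi>) = (\<integral>t. t \<partial>P)" "(\<integral>z. snd z \<partial>\<pi>) = (\<integral>t. t \<partial>Q)"
    using \<pi>_fst \<pi>_snd by simp_all
  have "\<bar>(\<integral>t. t \<partial>P) - (\<integral>t. t \<partial>Q)\<bar> = \<bar>\<integral>z. fst z - snd z \<partial>\<pi>\<bar>"
    using int by (simp add: means[symmetric])
  also have "\<dots> \<le> (\<integral>z. \<bar>fst z - snd z\<bar> \<partial>\<pi>)"
    by (rule integral_abs_bound)
  finally have "ennreal \<bar>(\<integral>t. t \<partial>P) - (\<integral>t. t \<partial>Q)\<bar> \<le> ennreal (\<integral>z. \<bar>fst z - snd z\<bar> \<partial>\<pi>)"
    by (rule ennreal_leI)
  also have "\<dots> = (\<integral>\<^sup>+ z. ennreal \<bar>fst z - snd z\<bar> \<partial>\<pi>)"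
    using int by (intro nn_integral_eq_integral[symmetric]) auto
  finally show "ennreal \<bar>(\<integral>t. t \<partial>P) - (\<integral>t. t \<partial>Q)\<bar> \<le> (\<integral>\<^sup>+ z. ennreal \<bar>fst z - snd z\<bar> \<partial>\<pi>)" .
qed

section \<open>Finite products\<close>

lemma borel_measurable_norm_sum_PiM:
  fixes \<mu> :: "'a::{banach,second_countable_topology} measure"
  assumes "S \<subseteq> I" and "sets \<mu> = sets borel"
  shows "(\<lambda>x. ennreal (norm (\<Sum>i\<in>S. x i))) \<in> borel_measurable (PiM I (\<lambda>_. \<mu>))"
proof -
  have "(\<lambda>x. \<Sum>i\<in>S. x i) \<in> borel_measurable (PiM I (\<lambda>_. (borel :: 'a measure)))"
    using assms(1) by (intro borel_measurable_sum) (auto intro!: measurable_component_singleton)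
  then have "(\<lambda>x. ennreal (norm (\<Sum>i\<in>S. x i))) \<in> borel_measurable (PiM I (\<lambda>_. (borel :: 'a measure)))"
    by measurable
  moreover have "sets (PiM I (\<lambda>_. \<mu>)) = sets (PiM I (\<lambda>_. (borel :: 'a measure)))"
    using assms(2) by (intro sets_PiM_cong) auto
  ultimately show ?thesis
    by (subst measurable_cong_sets) auto
qed

lemma borel_measurable_norm_signed_sum_pair:
  "(\<lambda>p. ennreal (norm (\<Sum>i\<in>I. snd p i *\<^sub>R fst p i)))
    \<in> borel_measurable (PiM I (\<lambda>_. borel) \<Otimes>\<^sub>M PiM I (\<lambda>_. (borel :: real measure)) ::
        (('i \<Rightarrow> 'a::{banach,second_countable_topology}) \<times> ('i \<Rightarrow> real)) measure)"
proof -
  have "(\<lambda>p. \<Sum>i\<in>I. snd p i *\<^sub>R fst p i)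
    \<in> borel_measurable (PiM I (\<lambda>_. borel) \<Otimes>\<^sub>M PiM I (\<lambda>_. (borel :: real measure)) ::
        (('i \<Rightarrow> 'a) \<times> ('i \<Rightarrow> real)) measure)"
  proof (intro borel_measurable_sum borel_measurable_scaleR)
    fix i assume i: "i \<in> I"
    show "(\<lambda>p. snd p i) \<in> borel_measurable (PiM I (\<lambda>_. borel) \<Otimes>\<^sub>M PiM I (\<lambda>_. borel))"
      by (rule measurable_compose[OF measurable_snd measurable_component_singleton[OF i]])
    show "(\<lambda>p. fst p i) \<in> borel_measurable (PiM I (\<lambda>_. borel) \<Otimes>\<^sub>M PiM I (\<lambda>_. borel))"
      by (rule measurable_compose[OF measurable_fst measurable_component_singleton[OF i]])
  qed
  then show ?thesis
    by measurable
qed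

lemma (in prob_space) distr_restrict_iid_eq_PiM:
  assumes "I \<noteq> {}" and indep: "indep_vars (\<lambda>_. borel) X I"
    and distr_X: "\<And>i. i \<in> I \<Longrightarrow> distr M borel (X i) = \<mu>"
  shows "distr M (PiM I (\<lambda>_. borel)) (\<lambda>\<omega>. \<lambda>i\<in>I. X i \<omega>) = PiM I (\<lambda>_. \<mu>)"
proof -
  have "\<And>i. i \<in> I \<Longrightarrow> X i \<in> borel_measurable M"
    using indep by (simp add: indep_vars_def2)
  then have "distr M (PiM I (\<lambda>_. borel)) (\<lambda>\<omega>. \<lambda>i\<in>I. X i \<omega>) = PiM I (\<lambda>i. distr M borel (X i))"
    using indep_vars_iff_distr_eq_PiM'[where M'="\<lambda>_. borel" and X=X, OF assms(1)] indep by simp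
  also have "\<dots> = PiM I (\<lambda>_. \<mu>)"
    using distr_X by (intro PiM_cong) auto
  finally show ?thesis .
qed

lemma AE_distr_restrict_all:
  assumes "finite I" and meas: "\<And>i. i \<in> I \<Longrightarrow> X i \<in> borel_measurable N"
    and [measurable]: "B \<in> sets borel" and AE: "\<And>i. i \<in> I \<Longrightarrow> AE \<omega> in N. X i \<omega> \<in> B"
  shows "AE x in distr N (PiM I (\<lambda>_. borel)) (\<lambda>\<omega>. \<lambda>i\<in>I. X i \<omega>). \<forall>i\<in>I. x i \<in> B"
proof -
  have "{x \<in> space (PiM I (\<lambda>_. borel)). \<forall>i\<in>I. x i \<in> B} \<in> sets (PiM I (\<lambda>_. borel))"
  proof (rule sets.sets_Collect_finite_All[OF _ assms(1)])
    fix i assume "i \<in> I"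
    then show "{x \<in> space (PiM I (\<lambda>_. borel)). x i \<in> B} \<in> sets (PiM I (\<lambda>_. borel))"
      by measurable
  qed
  moreover have "AE \<omega> in N. \<forall>i\<in>I. X i \<omega> \<in> B"
    using AE assms(1) by (subst AE_finite_all) auto
  ultimately show ?thesis
    using meas by (simp add: AE_distr_iff[OF measurable_restrict])
qed

section \<open>Centred distributions\<close>

locale centered_prob_space = prob_space \<mu>
  for \<mu> :: "'a::{banach,second_countable_topology} measure" +
  assumes sets_eq_borel: "sets \<mu> = sets borel"
    and integrable_id: "integrable \<mu> (\<lambda>x. x)"
    and mean_zero: "(\<integral>x. x \<partial>\<mu>) = 0"
begin

lemma W1_blinfun_empirical_ge:
  fixes v :: "'a \<Rightarrow>\<^sub>L real" and n :: nat
  assumes "0 < n"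
  shows "ennreal (\<bar>v (\<Sum>i<n. x i)\<bar> / n) \<le> W1 (distr \<mu> borel v) (distr (empirical n x) borel v)"
proof -
  have v_meas: "blinfun_apply v \<in> borel_measurable borel"
    by (intro borel_measurable_continuous_onI) (auto intro: continuous_intros)
  have "blinfun_apply v \<in> borel_measurable \<mu>"
    by (subst measurable_cong_sets[OF sets_eq_borel refl]) (rule v_meas)
  then have "integrable (distr \<mu> borel v) (\<lambda>t. t) = integrable \<mu> (\<lambda>x. v x)"
    and "(\<integral>t. t \<partial>distr \<mu> borel v) = (\<integral>x. v x \<partial>\<mu>)"
    by (rule integrable_distr_eq[OF _ measurable_ident_sets[OF refl]],
        rule integral_distr[OF _ measurable_ident_sets[OF refl]])
  moreover have "integrable \<mu> (\<lambda>x. v x)" and "(\<integral>x. v x \<partial>\<mu>) = 0"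
    using integrable_bounded_linear[OF blinfun.bounded_linear_right integrable_id]
      integral_bounded_linear[OF blinfun.bounded_linear_right integrable_id] mean_zero
    by simp_all
  ultimately have \<mu>_int: "integrable (distr \<mu> borel v) (\<lambda>t. t)"
    and \<mu>_mean: "(\<integral>t. t \<partial>distr \<mu> borel v) = 0"
    by simp_all
  have emp_int: "integrable (distr (empirical n x) borel v) (\<lambda>t. t)"
    and emp_mean: "(\<integral>t. t \<partial>distr (empirical n x) borel v) = v (\<Sum>i<n. x i) / n"
    using assms by (simp_all add: distr_empirical[OF v_meas] integrable_empirical
        integral_empirical blinfun.sum_right)
  show ?thesis
    using W1_ge_abs_mean_diff[OF \<mu>_int emp_int] by (simp add: \<mu>_mean emp_mean)
qed

lemma W11_empirical_ge:
  fixes n :: nat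
  assumes "0 < n"
  shows "ennreal (norm (\<Sum>i<n. x i) / n) \<le> W11 \<mu> (empirical n x)"
proof -
  obtain v :: "'a \<Rightarrow>\<^sub>L real" where v: "norm v \<le> 1" "v (\<Sum>i<n. x i) = norm (\<Sum>i<n. x i)"
    by (rule exists_norming_functional)
  have "ennreal (norm (\<Sum>i<n. x i) / n) \<le> W1 (distr \<mu> borel v) (distr (empirical n x) borel v)"
    using W1_blinfun_empirical_ge[OF assms, of v x] v(2) by simp
  also have "\<dots> \<le> W11 \<mu> (empirical n x)"
    unfolding W11_def using v(1) by (intro SUP_upper) simp
  finally show ?thesis .
qed

lemma nn_integral_W11_empirical_ge:
  fixes N :: "'b measure" and X :: "nat \<Rightarrow> 'b \<Rightarrow> 'a" and n :: nat
  assumes "0 < n" and X_meas: "\<And>i. i < n \<Longrightarrow> X i \<in> borel_measurable N"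
  shows "ennreal (1 / n) * (\<integral>\<^sup>+ \<omega>. ennreal (norm (\<Sum>i<n. X i \<omega>)) \<partial>N)
       \<le> (\<integral>\<^sup>+ \<omega>. W11 \<mu> (empirical n (\<lambda>i. X i \<omega>)) \<partial>N)"
proof -
  have "(\<lambda>\<omega>. \<Sum>i<n. X i \<omega>) \<in> borel_measurable N"
    using X_meas by (intro borel_measurable_sum) simp
  then have "ennreal (1 / n) * (\<integral>\<^sup>+ \<omega>. ennreal (norm (\<Sum>i<n. X i \<omega>)) \<partial>N)
      = (\<integral>\<^sup>+ \<omega>. ennreal (norm (\<Sum>i<n. X i \<omega>) / n) \<partial>N)"
    by (subst nn_integral_cmult[symmetric]) (auto simp: ennreal_mult''[symmetric])
  also have "\<dots> \<le> (\<integral>\<^sup>+ \<omega>. W11 \<mu> (empirical n (\<lambda>i. X i \<omega>)) \<partial>N)"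
    by (intro nn_integral_mono W11_empirical_ge assms(1))
  finally show ?thesis .
qed

lemma norm_le_nn_integral_norm_add: "ennreal (norm c) \<le> (\<integral>\<^sup>+ y. ennreal (norm (c + y)) \<partial>\<mu>)"
proof -
  have int: "integrable \<mu> (\<lambda>y. c + y)"
    using integrable_id by simp
  have "(\<integral>y. c + y \<partial>\<mu>) = c"
    using integrable_id mean_zero by (simp add: prob_space)
  then have "norm c \<le> (\<integral>y. norm (c + y) \<partial>\<mu>)"
    using integral_norm_bound[of \<mu> "\<lambda>y. c + y"] by simp
  then have "ennreal (norm c) \<le> ennreal (\<integral>y. norm (c + y) \<partial>\<mu>)"
    by (rule ennreal_leI)
  also have "\<dots> = (\<integral>\<^sup>+ y. ennreal (norm (c + y)) \<partial>\<mu>)"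
    using int by (intro nn_integral_eq_integral[symmetric]) auto
  finally show ?thesis .
qed

text \<open>Integrate out coordinate \<open>j\<close> first; by Jensen, adding the centred summand \<open>x\<^sub>j\<close>
  does not decrease the norm on average.\<close>
lemma nn_integral_norm_sum_le_insert:
  assumes I: "finite I" and j: "j \<in> I" "j \<notin> S" and S: "S \<subseteq> I"
  shows "(\<integral>\<^sup>+ x. ennreal (norm (\<Sum>i\<in>S. x i)) \<partial>PiM I (\<lambda>_. \<mu>))
       \<le> (\<integral>\<^sup>+ x. ennreal (norm (\<Sum>i\<in>insert j S. x i)) \<partial>PiM I (\<lambda>_. \<mu>))"
proof -
  interpret product_sigma_finite "\<lambda>_. \<mu>"
    unfolding product_sigma_finite_def using prob_space_imp_sigma_finite[OF prob_space_axioms] by simp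
  define K where "K = I - {j}"
  have I_eq: "I = insert j K" and K: "finite K" "j \<notin> K" "S \<subseteq> K"
    using I j S by (auto simp: K_def)
  have sum_upd: "(\<Sum>i\<in>S. (x(j := y)) i) = (\<Sum>i\<in>S. x i)" for x y
    using j(2) by (intro sum.cong) auto
  have "(\<integral>\<^sup>+ x. ennreal (norm (\<Sum>i\<in>S. x i)) \<partial>PiM I (\<lambda>_. \<mu>))
      = (\<integral>\<^sup>+ x. (\<integral>\<^sup>+ y. ennreal (norm (\<Sum>i\<in>S. (x(j := y)) i)) \<partial>\<mu>) \<partial>PiM K (\<lambda>_. \<mu>))"
    unfolding I_eq
    by (rule product_nn_integral_insert[OF K(1,2) borel_measurable_norm_sum_PiM])
      (use K(3) sets_eq_borel in auto)
  also have "\<dots> = (\<integral>\<^sup>+ x. ennreal (norm (\<Sum>i\<in>S. x i)) \<partial>PiM K (\<lambda>_. \<mu>))"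
    unfolding sum_upd by (simp add: emeasure_space_1)
  also have "\<dots> \<le> (\<integral>\<^sup>+ x. (\<integral>\<^sup>+ y. ennreal (norm (\<Sum>i\<in>insert j S. (x(j := y)) i)) \<partial>\<mu>) \<partial>PiM K (\<lambda>_. \<mu>))"
  proof (rule nn_integral_mono)
    fix x :: "_ \<Rightarrow> 'a"
    have "finite S" using S I finite_subset by blast
    then have "(\<Sum>i\<in>insert j S. (x(j := y)) i) = (\<Sum>i\<in>S. x i) + y" for y
      using j(2) sum.insert[of S j "x(j := y)"] unfolding sum_upd by (simp add: add.commute)
    then show "ennreal (norm (\<Sum>i\<in>S. x i))
        \<le> (\<integral>\<^sup>+ y. ennreal (norm (\<Sum>i\<in>insert j S. (x(j := y)) i)) \<partial>\<mu>)"
      using norm_le_nn_integral_norm_add[of "\<Sum>i\<in>S. x i"] by simp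
  qed
  also have "\<dots> = (\<integral>\<^sup>+ x. ennreal (norm (\<Sum>i\<in>insert j S. x i)) \<partial>PiM I (\<lambda>_. \<mu>))"
    unfolding I_eq
    by (rule product_nn_integral_insert[OF K(1,2) borel_measurable_norm_sum_PiM, symmetric])
      (use K(3) sets_eq_borel in auto)
  finally show ?thesis .
qed

lemma nn_integral_norm_sum_mono:
  assumes I: "finite I" and "S \<subseteq> T" "T \<subseteq> I"
  shows "(\<integral>\<^sup>+ x. ennreal (norm (\<Sum>i\<in>S. x i)) \<partial>PiM I (\<lambda>_. \<mu>))
       \<le> (\<integral>\<^sup>+ x. ennreal (norm (\<Sum>i\<in>T. x i)) \<partial>PiM I (\<lambda>_. \<mu>))"
proof -
  have "(\<integral>\<^sup>+ x. ennreal (norm (\<Sum>i\<in>S. x i)) \<partial>PiM I (\<lambda>_. \<mu>))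
      \<le> (\<integral>\<^sup>+ x. ennreal (norm (\<Sum>i\<in>S \<union> D. x i)) \<partial>PiM I (\<lambda>_. \<mu>))"
    if "finite D" "D \<subseteq> I - S" for D
    using that
  proof (induction D rule: finite_induct)
    case (insert j D)
    then have "(\<integral>\<^sup>+ x. ennreal (norm (\<Sum>i\<in>S. x i)) \<partial>PiM I (\<lambda>_. \<mu>))
        \<le> (\<integral>\<^sup>+ x. ennreal (norm (\<Sum>i\<in>S \<union> D. x i)) \<partial>PiM I (\<lambda>_. \<mu>))"
      by simp
    also have "\<dots> \<le> (\<integral>\<^sup>+ x. ennreal (norm (\<Sum>i\<in>insert j (S \<union> D). x i)) \<partial>PiM I (\<lambda>_. \<mu>))"
      using insert.hyps(2) insert.prems assms(2,3) by (intro nn_integral_norm_sum_le_insert I) auto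
    finally show ?case by simp
  qed simp
  moreover have "finite (T - S)"
    by (rule finite_subset[OF _ I]) (use assms(3) in blast)
  ultimately show ?thesis
    using assms(2,3) by (metis Diff_mono Un_Diff_cancel Un_absorb1 order_refl)
qed

lemma nn_integral_norm_signed_sum_le:
  fixes e :: "'i \<Rightarrow> real"
  assumes I: "finite I" and e: "\<forall>i\<in>I. e i \<in> {-1, 1}"
  shows "(\<integral>\<^sup>+ x. ennreal (norm (\<Sum>i\<in>I. e i *\<^sub>R x i)) \<partial>PiM I (\<lambda>_. \<mu>))
       \<le> 2 * (\<integral>\<^sup>+ x. ennreal (norm (\<Sum>i\<in>I. x i)) \<partial>PiM I (\<lambda>_. \<mu>))"
proof -
  define A where "A = {i\<in>I. e i = 1}"
  define B where "B = I - A"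
  have AB: "A \<subseteq> I" "B \<subseteq> I" "finite A" "finite B" "A \<inter> B = {}" "A \<union> B = I"
    using I by (auto simp: A_def B_def)
  have e_B: "e i = -1" if "i \<in> B" for i
    using e that by (auto simp: A_def B_def)
  have split: "(\<Sum>i\<in>I. e i *\<^sub>R x i) = (\<Sum>i\<in>A. x i) - (\<Sum>i\<in>B. x i)" for x :: "'i \<Rightarrow> 'a"
  proof -
    have "(\<Sum>i\<in>I. e i *\<^sub>R x i) = (\<Sum>i\<in>A. e i *\<^sub>R x i) + (\<Sum>i\<in>B. e i *\<^sub>R x i)"
      using sum.union_disjoint[OF AB(3-5), of "\<lambda>i. e i *\<^sub>R x i"] AB(6) by simp
    also have "(\<Sum>i\<in>A. e i *\<^sub>R x i) = (\<Sum>i\<in>A. x i)"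
      by (intro sum.cong) (auto simp: A_def)
    also have "(\<Sum>i\<in>B. e i *\<^sub>R x i) = - (\<Sum>i\<in>B. x i)"
      using e_B by (simp add: sum_negf[symmetric])
    finally show ?thesis by simp
  qed
  have "(\<integral>\<^sup>+ x. ennreal (norm (\<Sum>i\<in>I. e i *\<^sub>R x i)) \<partial>PiM I (\<lambda>_. \<mu>))
      \<le> (\<integral>\<^sup>+ x. ennreal (norm (\<Sum>i\<in>A. x i)) + ennreal (norm (\<Sum>i\<in>B. x i)) \<partial>PiM I (\<lambda>_. \<mu>))"
    unfolding split
    by (intro nn_integral_mono) (simp add: ennreal_plus[symmetric] norm_triangle_ineq4 del: ennreal_plus)
  also have "\<dots> = (\<integral>\<^sup>+ x. ennreal (norm (\<Sum>i\<in>A. x i)) \<partial>PiM I (\<lambda>_. \<mu>))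
      + (\<integral>\<^sup>+ x. ennreal (norm (\<Sum>i\<in>B. x i)) \<partial>PiM I (\<lambda>_. \<mu>))"
    using AB(1,2) sets_eq_borel by (intro nn_integral_add borel_measurable_norm_sum_PiM)
  also have "\<dots> \<le> 2 * (\<integral>\<^sup>+ x. ennreal (norm (\<Sum>i\<in>I. x i)) \<partial>PiM I (\<lambda>_. \<mu>))"
    using nn_integral_norm_sum_mono[OF I AB(1) order_refl] nn_integral_norm_sum_mono[OF I AB(2) order_refl]
    unfolding mult_2 by (rule add_mono)
  finally show ?thesis .
qed

lemma nn_integral_norm_random_signed_sum_le:
  assumes I: "finite I" and Pe: "prob_space Pe" and Pe_sets: "sets Pe = sets (PiM I (\<lambda>_. borel))"
    and signs: "AE e in Pe. \<forall>i\<in>I. e i \<in> {-1, 1}"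
  shows "(\<integral>\<^sup>+ p. ennreal (norm (\<Sum>i\<in>I. snd p i *\<^sub>R fst p i)) \<partial>(PiM I (\<lambda>_. \<mu>) \<Otimes>\<^sub>M Pe))
       \<le> 2 * (\<integral>\<^sup>+ x. ennreal (norm (\<Sum>i\<in>I. x i)) \<partial>PiM I (\<lambda>_. \<mu>))"
proof -
  have "prob_space (PiM I (\<lambda>_. \<mu>))"
    by (rule prob_space_PiM) (rule prob_space_axioms)
  then interpret pair_sigma_finite "PiM I (\<lambda>_. \<mu>)" Pe
    using Pe by (intro pair_sigma_finite.intro prob_space_imp_sigma_finite)
  have "sets (PiM I (\<lambda>_. \<mu>) \<Otimes>\<^sub>M Pe) = sets (PiM I (\<lambda>_. borel) \<Otimes>\<^sub>M PiM I (\<lambda>_. borel))"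
    using sets_eq_borel Pe_sets by (intro sets_pair_measure_cong sets_PiM_cong) auto
  then have F_meas: "(\<lambda>p. ennreal (norm (\<Sum>i\<in>I. snd p i *\<^sub>R fst p i)))
      \<in> borel_measurable (PiM I (\<lambda>_. \<mu>) \<Otimes>\<^sub>M Pe)"
    by (subst measurable_cong_sets[OF _ refl]) (auto intro: borel_measurable_norm_signed_sum_pair)
  have "(\<integral>\<^sup>+ p. ennreal (norm (\<Sum>i\<in>I. snd p i *\<^sub>R fst p i)) \<partial>(PiM I (\<lambda>_. \<mu>) \<Otimes>\<^sub>M Pe))
      = (\<integral>\<^sup>+ e. (\<integral>\<^sup>+ x. ennreal (norm (\<Sum>i\<in>I. e i *\<^sub>R x i)) \<partial>PiM I (\<lambda>_. \<mu>)) \<partial>Pe)"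
    using nn_integral_snd[OF F_meas] by simp
  also have "\<dots> \<le> (\<integral>\<^sup>+ e. 2 * (\<integral>\<^sup>+ x. ennreal (norm (\<Sum>i\<in>I. x i)) \<partial>PiM I (\<lambda>_. \<mu>)) \<partial>Pe)"
    using signs by (intro nn_integral_mono_AE) (auto elim!: AE_mp intro!: nn_integral_norm_signed_sum_le I)
  also have "\<dots> = 2 * (\<integral>\<^sup>+ x. ennreal (norm (\<Sum>i\<in>I. x i)) \<partial>PiM I (\<lambda>_. \<mu>))"
    using prob_space.emeasure_space_1[OF Pe] by simp
  finally show ?thesis .
qed

lemma nn_integral_norm_signed_sum_indep_le:
  fixes N :: "'b measure" and X :: "'i \<Rightarrow> 'b \<Rightarrow> 'a" and \<epsilon> :: "'i \<Rightarrow> 'b \<Rightarrow> real"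
  assumes N: "prob_space N" and I: "finite I" "I \<noteq> {}"
    and X_indep: "prob_space.indep_vars N (\<lambda>_. borel) X I"
    and X_distr: "\<And>i. i \<in> I \<Longrightarrow> distr N borel (X i) = \<mu>"
    and \<epsilon>_meas: "\<And>i. i \<in> I \<Longrightarrow> \<epsilon> i \<in> borel_measurable N"
    and signs: "\<And>i. i \<in> I \<Longrightarrow> AE \<omega> in N. \<epsilon> i \<omega> \<in> {-1, 1}"
    and joint: "distr N (PiM I (\<lambda>_. borel) \<Otimes>\<^sub>M PiM I (\<lambda>_. borel))
        (\<lambda>\<omega>. (\<lambda>i\<in>I. X i \<omega>, \<lambda>i\<in>I. \<epsilon> i \<omega>))
      = distr N (PiM I (\<lambda>_. borel)) (\<lambda>\<omega>. \<lambda>i\<in>I. X i \<omega>)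
        \<Otimes>\<^sub>M distr N (PiM I (\<lambda>_. borel)) (\<lambda>\<omega>. \<lambda>i\<in>I. \<epsilon> i \<omega>)"
  shows "(\<integral>\<^sup>+ \<omega>. ennreal (norm (\<Sum>i\<in>I. \<epsilon> i \<omega> *\<^sub>R X i \<omega>)) \<partial>N)
       \<le> 2 * (\<integral>\<^sup>+ \<omega>. ennreal (norm (\<Sum>i\<in>I. X i \<omega>)) \<partial>N)"
proof -
  interpret N: prob_space N by (rule N)
  define Xv where "Xv = (\<lambda>\<omega>. \<lambda>i\<in>I. X i \<omega>)"
  define ev where "ev = (\<lambda>\<omega>. \<lambda>i\<in>I. \<epsilon> i \<omega>)"
  define F where "F p = ennreal (norm (\<Sum>i\<in>I. snd p i *\<^sub>R fst p i))" for p :: "('i \<Rightarrow> 'a) \<times> ('i \<Rightarrow> real)"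
  have Xv_meas: "Xv \<in> N \<rightarrow>\<^sub>M PiM I (\<lambda>_. borel)"
    unfolding Xv_def using X_indep by (intro measurable_restrict) (simp add: N.indep_vars_def2)
  have ev_meas: "ev \<in> N \<rightarrow>\<^sub>M PiM I (\<lambda>_. borel)"
    unfolding ev_def using \<epsilon>_meas by (rule measurable_restrict)
  have law_X: "distr N (PiM I (\<lambda>_. borel)) Xv = PiM I (\<lambda>_. \<mu>)"
    unfolding Xv_def using I(2) X_indep X_distr by (rule N.distr_restrict_iid_eq_PiM)
  have F_meas: "F \<in> borel_measurable (PiM I (\<lambda>_. borel) \<Otimes>\<^sub>M PiM I (\<lambda>_. borel))"
    unfolding F_def[abs_def] by (rule borel_measurable_norm_signed_sum_pair)
  have "(\<integral>\<^sup>+ \<omega>. ennreal (norm (\<Sum>i\<in>I. \<epsilon> i \<omega> *\<^sub>R X i \<omega>)) \<partial>N) = (\<integral>\<^sup>+ \<omega>. F (Xv \<omega>, ev \<omega>) \<partial>N)"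
    by (intro nn_integral_cong) (simp add: F_def Xv_def ev_def)
  also have "\<dots> = (\<integral>\<^sup>+ p. F p \<partial>distr N (PiM I (\<lambda>_. borel) \<Otimes>\<^sub>M PiM I (\<lambda>_. borel)) (\<lambda>\<omega>. (Xv \<omega>, ev \<omega>)))"
    using Xv_meas ev_meas F_meas by (intro nn_integral_distr[symmetric] measurable_Pair) simp_all
  also have "\<dots> = (\<integral>\<^sup>+ p. F p \<partial>(PiM I (\<lambda>_. \<mu>) \<Otimes>\<^sub>M distr N (PiM I (\<lambda>_. borel)) ev))"
    using joint law_X by (simp add: Xv_def ev_def)
  also have "\<dots> \<le> 2 * (\<integral>\<^sup>+ x. ennreal (norm (\<Sum>i\<in>I. x i)) \<partial>PiM I (\<lambda>_. \<mu>))"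
    unfolding F_def ev_def
    using N.prob_space_distr[OF ev_meas[unfolded ev_def]] AE_distr_restrict_all[OF I(1) \<epsilon>_meas _ signs]
    by (intro nn_integral_norm_random_signed_sum_le I) simp_all
  also have "(\<integral>\<^sup>+ x. ennreal (norm (\<Sum>i\<in>I. x i)) \<partial>PiM I (\<lambda>_. \<mu>))
      = (\<integral>\<^sup>+ \<omega>. ennreal (norm (\<Sum>i\<in>I. X i \<omega>)) \<partial>N)"
    unfolding law_X[symmetric]
    using borel_measurable_norm_sum_PiM[OF order_refl, of "borel :: 'a measure" I]
    by (subst nn_integral_distr[OF Xv_meas]) (simp_all add: Xv_def)
  finally show ?thesis .
qed

end

theorem proposition2p10:
  fixes \<mu> :: "'a::{banach,second_countable_topology} measure"
    and M :: "'b measure"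
    and X :: "nat \<Rightarrow> 'b \<Rightarrow> 'a"
    and \<epsilon> :: "nat \<Rightarrow> 'b \<Rightarrow> real"
    and n :: nat
  assumes sep_dual: "\<exists>D :: ('a \<Rightarrow>\<^sub>L real) set. countable D \<and> closure D = UNIV"
    and mu_prob: "prob_space \<mu>"
    and mu_sets: "sets \<mu> = sets borel"
    and mu_int: "integrable \<mu> (\<lambda>x. x)"
    and mu_mean: "(\<integral>x. x \<partial>\<mu>) = 0"
    and n_pos: "n \<ge> 1"
    and M_prob: "prob_space M"
    and X_indep: "prob_space.indep_vars M (\<lambda>_. borel) X {..<n}"
    and X_distr: "\<forall>i<n. distr M borel (X i) = \<mu>"
    and eps_indep: "prob_space.indep_vars M (\<lambda>_. borel) \<epsilon> {..<n}"
    and eps_vals: "\<forall>i<n. AE \<omega> in M. \<epsilon> i \<omega> \<in> {-1, 1}"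
    and eps_unif: "\<forall>i<n. measure M {\<omega>\<in>space M. \<epsilon> i \<omega> = 1} = 1/2"
    and X_eps_indep: "distr M (PiM {..<n} (\<lambda>_. borel) \<Otimes>\<^sub>M PiM {..<n} (\<lambda>_. borel))
          (\<lambda>\<omega>. (\<lambda>i\<in>{..<n}. X i \<omega>, \<lambda>i\<in>{..<n}. \<epsilon> i \<omega>))
        = distr M (PiM {..<n} (\<lambda>_. borel)) (\<lambda>\<omega>. \<lambda>i\<in>{..<n}. X i \<omega>)
          \<Otimes>\<^sub>M distr M (PiM {..<n} (\<lambda>_. borel)) (\<lambda>\<omega>. \<lambda>i\<in>{..<n}. \<epsilon> i \<omega>)"
  shows "(\<integral>\<^sup>+\<omega>. W11 \<mu> (empirical n (\<lambda>i. X i \<omega>)) \<partial>M)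
         \<ge> ennreal (1 / (2 * real n)) * (\<integral>\<^sup>+\<omega>. ennreal (norm (\<Sum>i<n. \<epsilon> i \<omega> *\<^sub>R X i \<omega>)) \<partial>M)"
proof -
  interpret M: prob_space M by (rule M_prob)
  interpret centered_prob_space \<mu>
    using mu_prob mu_sets mu_int mu_mean
    by (simp add: centered_prob_space_def centered_prob_space_axioms_def)
  have n: "0 < n" using n_pos by simp
  define S where "S = (\<integral>\<^sup>+ \<omega>. ennreal (norm (\<Sum>i<n. X i \<omega>)) \<partial>M)"
  have lower: "ennreal (1 / n) * S \<le> (\<integral>\<^sup>+ \<omega>. W11 \<mu> (empirical n (\<lambda>i. X i \<omega>)) \<partial>M)"
    unfolding S_def using n X_indep by (intro nn_integral_W11_empirical_ge) (auto simp: M.indep_vars_def2)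
  have "(\<integral>\<^sup>+ \<omega>. ennreal (norm (\<Sum>i<n. \<epsilon> i \<omega> *\<^sub>R X i \<omega>)) \<partial>M) \<le> 2 * S"
    unfolding S_def using n eps_indep eps_vals X_distr
    by (intro nn_integral_norm_signed_sum_indep_le M_prob X_indep X_eps_indep)
      (auto simp: M.indep_vars_def2)
  then have "ennreal (1 / (2 * real n)) * (\<integral>\<^sup>+ \<omega>. ennreal (norm (\<Sum>i<n. \<epsilon> i \<omega> *\<^sub>R X i \<omega>)) \<partial>M)
      \<le> ennreal (1 / (2 * real n)) * (2 * S)"
    by (rule mult_left_mono) simp
  also have "\<dots> = ennreal (1 / n) * S"
    using ennreal_mult[of "1 / (2 * real n)" 2] by (simp add: mult.assoc[symmetric])
  finally show ?thesis
    using lower by simp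
qed

end
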